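(* Let $\{B_t : t\ge 0\}$ be an adapted fuzzy set--valued stochastic process on $(\Omega,\mathcal F,\{\mathcal F_t\},\mathbb P)$ with values in $\mathcal F_{kc}(\mathbb R^d)$. Then $\{B_t\}_{t\ge 0}$ is a fuzzy set--valued Brownian motion if and only if there exists a Wiener process $\{b_t : t\ge 0\}$ in $\mathbb R^d$ such that, for every $t\ge 0$, \[ B_t = \mathbf 1_{\{b_t\}} \qquad \mathbb P\text{-a.s.}, \] where $\mathbf 1_{\{a\}}:\mathbb R^d\to\{0,1\}$ is the indicator function of the singleton $\{a\}$.
   Context: $(\Omega,\mathcal F,\mathbb P)$ is a complete probability space with a filtration $\{\mathcal F_t\}_{t\ge0}$ satisfying the usual conditions. A fuzzy set is a map $\nu:\mathbb R^d\to[0,1]$. $\mathcal F_{kc}(\mathbb R^d)$ is the family of fuzzy sets $\nu$ such that: - every level set $\nu_\alpha=\{x:\nu(x)\ge\alpha\}$, $\alpha\in(0,1]$, is closed; - $\nu_1\neq\emptyset$; - the support $\nu_{0+}=\overline{\{x:\nu(x)>0\}}$ is compact; - every $\nu_\alpha$ is convex. Operations are defined levelwise by $(\nu^1\oplus\nu^2)_\alpha=\nu^1_\alpha+\nu^2_\alpha$ (Minkowski sum) and $(\lambda\nu)_\alpha=\lambda\nu_\alpha$. A fuzzy set--valued random variable is a map $X:\Omega\to\mathcal F_{kc}(\mathbb R^d)$ such that each $\omega\mapsto X(\omega)_\alpha$, $\alpha\in(0,1]$, is a random compact convex set, i.e. measurable with respect to the Borel $\sigma$-algebra of the Hausdorff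 metric. The process is adapted if each $B_t$ is $\mathcal F_t$-measurable. Let $S^{d-1}$ be the unit sphere of $\mathbb R^d$ and $C(S^{d-1})$ the continuous functions on it with the sup norm. $\overline{\mathbf C}$ denotes the Banach space of functions $f:[0,1]\to C(S^{d-1})$ that are bounded, left continuous on $(0,1]$, right continuous at $0$, and have right limits on $(0,1)$, with norm $\|f\|=\sup_{\alpha}\|f(\alpha)\|_{C}$. The support function of $\nu\in\mathcal F_{kc}(\mathbb R^d)$ is the element $s_\nu\in\overline{\mathbf C}$ given by $s_\nu(x,\alpha)=\sup\{\langle x,a\rangle : a\in\nu_\alpha\}$ for $\alpha>0$, and by the same formula with $\nu_{0+}$ in place of $\nu_\alpha$ for $\alpha=0$. The map $\nu\mapsto s_\nu$ is an isometric embedding of $\mathcal F_{kc}(\mathbb R^d)$ into $\overline{\mathbf C}$ (with the metric $d_\infty(\nu^1,\nu^2)=\sup_\alpha d_H(\nu^1_\alpha,\nu^2_\alpha)$), is additive and positively homogeneous, and has closed image. A process is a fuzzy set--valued Brownian motion if $\{s_{B_t}\}_{t\ge0}$ is a Brownian motion in $\overline{\mathbf C}$. This means it is a Gaussian process starting at $0$, i.e. $B_0=\mathbf 1_{\{0\}}$, with $\mathbb E[f(s_{B_t})]=0$ for all $t\ge0$ and all $f\in\overline{\mathbf C}^*$, independent increments, and covariances of the form $(t\wedge s)$ times a fixed covariance. Here a process $\{s_{B_t}\}$ is Gaussian if for every $n$ and all $f_1,\dots,f_n\in\overline{\mathbf C}^*$ the real process $\{(f_1(s_{B_t}),\dots,f_n(s_{B_t}))\}_t$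 is Gaussian. A Wiener process in $\mathbb R^d$ is a centered Gaussian process with $b_0=0$ and independent Gaussian increments whose covariance is $(t-s)$ times a fixed covariance matrix. *)

theory Defs
  imports "HOL-Probability.Probability"
begin

definition level :: "('a::euclidean_space \<Rightarrow> real) \<Rightarrow> real \<Rightarrow> 'a set" where
  "level \<nu> \<alpha> = (if \<alpha> = 0 then closure {x. \<nu> x > 0} else {x. \<nu> x \<ge> \<alpha>})"

definition Fkc :: "('a::euclidean_space \<Rightarrow> real) \<Rightarrow> bool" where
  "Fkc \<nu> \<longleftrightarrow> (\<forall>x. 0 \<le> \<nu> x \<and> \<nu> x \<le> 1)
     \<and> (\<forall>\<alpha>\<in>{0<..1}. closed (level \<nu> \<alpha>))
     \<and> level \<nu> 1 \<noteq> {}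
     \<and> compact (level \<nu> 0)
     \<and> (\<forall>\<alpha>\<in>{0<..1}. convex (level \<nu> \<alpha>))"

definition supp_fun :: "('a::euclidean_space \<Rightarrow> real) \<Rightarrow> real \<Rightarrow> 'a \<Rightarrow> real" where
  "supp_fun \<nu> \<alpha> x = Sup ((\<lambda>a. inner x a) ` level \<nu> \<alpha>)"

definition Cbar :: "(real \<Rightarrow> 'a::euclidean_space \<Rightarrow> real) set" where
  "Cbar = {g.
     (\<forall>\<alpha>\<in>{0..1}. continuous_on (sphere 0 1) (g \<alpha>))
   \<and> (\<exists>K. \<forall>\<alpha>\<in>{0..1}. \<forall>x\<in>sphere 0 1. \<bar>g \<alpha> x\<bar> \<le> K)
   \<and> (\<forall>\<alpha>\<in>{0<..1}. \<forall>e>0. \<exists>\<delta>>0. \<forall>\<beta>\<in>{0..1}. \<alpha> - \<delta> < \<beta> \<and> \<beta> \<le> \<alpha> \<longrightarrow>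
          (\<forall>x\<in>sphere 0 1. \<bar>g \<beta> x - g \<alpha> x\<bar> < e))
   \<and> (\<forall>e>0. \<exists>\<delta>>0. \<forall>\<beta>\<in>{0..1}. \<beta> < \<delta> \<longrightarrow>
          (\<forall>x\<in>sphere 0 1. \<bar>g \<beta> x - g 0 x\<bar> < e))
   \<and> (\<forall>\<alpha>\<in>{0<..<1}. \<exists>h. \<forall>e>0. \<exists>\<delta>>0. \<forall>\<beta>\<in>{0..1}. \<alpha> < \<beta> \<and> \<beta> < \<alpha> + \<delta> \<longrightarrow>
          (\<forall>x\<in>sphere 0 1. \<bar>g \<beta> x - h x\<bar> < e))}"

definition Cbar_norm :: "(real \<Rightarrow> 'a::euclidean_space \<Rightarrow> real) \<Rightarrow> real" where
  "Cbar_norm g = (SUP p\<in>{0..1} \<times> sphere (0::'a) 1. \<bar>g (fst p) (snd p)\<bar>)"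

definition Cbar_dual :: "((real \<Rightarrow> 'a::euclidean_space \<Rightarrow> real) \<Rightarrow> real) set" where
  "Cbar_dual = {f.
     (\<forall>g\<in>Cbar. \<forall>h\<in>Cbar. f (\<lambda>\<alpha> x. g \<alpha> x + h \<alpha> x) = f g + f h)
   \<and> (\<forall>g\<in>Cbar. \<forall>c::real. f (\<lambda>\<alpha> x. c * g \<alpha> x) = c * f g)
   \<and> (\<exists>K. \<forall>g\<in>Cbar. \<bar>f g\<bar> \<le> K * Cbar_norm g)}"

definition real_gaussian :: "'w measure \<Rightarrow> ('w \<Rightarrow> real) \<Rightarrow> bool" where
  "real_gaussian M X \<longleftrightarrow> X \<in> borel_measurable M \<and>
     (\<exists>\<mu> \<sigma>::real. (\<sigma> = 0 \<and> distr M borel X = return borel \<mu>)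
                 \<or> (\<sigma> > 0 \<and> distributed M lborel X (normal_density \<mu> \<sigma>)))"

definition gaussian_family :: "'w measure \<Rightarrow> 'i set \<Rightarrow> ('i \<Rightarrow> 'w \<Rightarrow> real) \<Rightarrow> bool" where
  "gaussian_family M I X \<longleftrightarrow> (\<forall>i\<in>I. X i \<in> borel_measurable M) \<and>
     (\<forall>c. real_gaussian M (\<lambda>\<omega>. \<Sum>i\<in>I. c i * X i \<omega>))"

definition gaussian_vec_process :: "'w measure \<Rightarrow> nat \<Rightarrow> (real \<Rightarrow> nat \<Rightarrow> 'w \<Rightarrow> real) \<Rightarrow> bool" where
  "gaussian_vec_process M n Y \<longleftrightarrow>
     (\<forall>S. finite S \<and> S \<subseteq> {0..} \<longrightarrow> gaussian_family M (S \<times> {..<n}) (\<lambda>(t,k). Y t k))"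

definition Cbar_BM :: "'w measure \<Rightarrow> (real \<Rightarrow> 'w \<Rightarrow> (real \<Rightarrow> 'a::euclidean_space \<Rightarrow> real)) \<Rightarrow> bool" where
  "Cbar_BM M X \<longleftrightarrow>
     \<comment> \<open>Gaussian process\<close>
     (\<forall>n (fs :: nat \<Rightarrow> (real \<Rightarrow> 'a \<Rightarrow> real) \<Rightarrow> real). (\<forall>k<n. fs k \<in> Cbar_dual) \<longrightarrow>
        gaussian_vec_process M n (\<lambda>t k \<omega>. fs k (X t \<omega>)))
   \<comment> \<open>starting at 0\<close>
   \<and> (AE \<omega> in M. \<forall>\<alpha>\<in>{0..1}. \<forall>x\<in>sphere 0 1. X 0 \<omega> \<alpha> x = 0)
   \<comment> \<open>centered\<close>
   \<and> (\<forall>t\<ge>0. \<forall>f\<in>Cbar_dual. integrable M (\<lambda>\<omega>. f (X t \<omega>)) \<and>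
          prob_space.expectation M (\<lambda>\<omega>. f (X t \<omega>)) = 0)
   \<comment> \<open>independent increments (w.r.t. the sigma-algebras generated by the dual functionals)\<close>
   \<and> (\<forall>n (t :: nat \<Rightarrow> real). 0 \<le> t 0 \<and> (\<forall>k<n. t k < t (Suc k)) \<longrightarrow>
        prob_space.indep_sets M
          (\<lambda>k. sigma_sets (space M)
             {(\<lambda>\<omega>. f (\<lambda>\<alpha> x. X (t (Suc k)) \<omega> \<alpha> x - X (t k) \<omega> \<alpha> x)) -` A \<inter> space M | f A.
                f \<in> Cbar_dual \<and> A \<in> sets borel}) {..<n})
   \<comment> \<open>covariance (s min t) times a fixed covariance\<close>
   \<and> (\<exists>R. \<forall>f\<in>Cbar_dual. \<forall>g\<in>Cbar_dual. \<forall>s\<ge>0. \<forall>t\<ge>0.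
        integrable M (\<lambda>\<omega>. f (X t \<omega>) * g (X s \<omega>)) \<and>
        prob_space.expectation M (\<lambda>\<omega>. f (X t \<omega>) * g (X s \<omega>)) = min t s * R f g)"

definition fuzzy_BM :: "'w measure \<Rightarrow> (real \<Rightarrow> 'w \<Rightarrow> ('a::euclidean_space \<Rightarrow> real)) \<Rightarrow> bool" where
  "fuzzy_BM M B \<longleftrightarrow> Cbar_BM M (\<lambda>t \<omega>. supp_fun (B t \<omega>))"

definition Kc :: "'a::euclidean_space set set" where
  "Kc = {K. compact K \<and> convex K \<and> K \<noteq> {}}"

definition hausdist :: "'a::euclidean_space set \<Rightarrow> 'a set \<Rightarrow> real" where
  "hausdist A B = max (SUP a\<in>A. infdist a B) (SUP b\<in>B. infdist b A)"

definition Kc_borel :: "'a::euclidean_space set measure" where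
  "Kc_borel = sigma Kc {U. U \<subseteq> Kc \<and>
      (\<forall>K\<in>U. \<exists>e>0. \<forall>K'\<in>Kc. hausdist K K' < e \<longrightarrow> K' \<in> U)}"

definition usual_filtration :: "'w measure \<Rightarrow> (real \<Rightarrow> 'w measure) \<Rightarrow> bool" where
  "usual_filtration M F \<longleftrightarrow>
     (\<forall>t\<ge>0. space (F t) = space M \<and> sets (F t) \<subseteq> sets M)
   \<and> (\<forall>s t. 0 \<le> s \<and> s \<le> t \<longrightarrow> sets (F s) \<subseteq> sets (F t))
   \<and> null_sets M \<subseteq> sets (F 0)
   \<and> (\<forall>t\<ge>0. sets (F t) = (\<Inter>s\<in>{t<..}. sets (F s)))"

definition adapted_fuzzy_process ::
  "'w measure \<Rightarrow> (real \<Rightarrow> 'w measure) \<Rightarrow> (real \<Rightarrow> 'w \<Rightarrow> ('a::euclidean_space \<Rightarrow> real)) \<Rightarrow> bool" where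
  "adapted_fuzzy_process M F B \<longleftrightarrow>
     (\<forall>t\<ge>0. \<forall>\<omega>\<in>space M. Fkc (B t \<omega>))
   \<and> (\<forall>t\<ge>0. \<forall>\<alpha>\<in>{0<..1}. (\<lambda>\<omega>. level (B t \<omega>) \<alpha>) \<in> measurable (F t) Kc_borel)"

definition wiener_process :: "'w measure \<Rightarrow> (real \<Rightarrow> 'w \<Rightarrow> 'a::euclidean_space) \<Rightarrow> bool" where
  "wiener_process M b \<longleftrightarrow>
     (\<forall>t\<ge>0. b t \<in> borel_measurable M)
   \<and> (\<forall>\<omega>\<in>space M. b 0 \<omega> = 0)
   \<comment> \<open>Gaussian process\<close>
   \<and> (\<forall>S. finite S \<and> S \<subseteq> {0..} \<longrightarrow>
        gaussian_family M (S \<times> Basis) (\<lambda>(t,i) \<omega>. inner (b t \<omega>) i))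
   \<comment> \<open>centered\<close>
   \<and> (\<forall>t\<ge>0. \<forall>v. integrable M (\<lambda>\<omega>. inner (b t \<omega>) v) \<and>
          prob_space.expectation M (\<lambda>\<omega>. inner (b t \<omega>) v) = 0)
   \<comment> \<open>independent increments\<close>
   \<and> (\<forall>n (t :: nat \<Rightarrow> real). 0 \<le> t 0 \<and> (\<forall>k<n. t k < t (Suc k)) \<longrightarrow>
        prob_space.indep_vars M (\<lambda>_. borel) (\<lambda>k \<omega>. b (t (Suc k)) \<omega> - b (t k) \<omega>) {..<n})
   \<comment> \<open>Gaussian increments with covariance (t - s) Q for a fixed covariance matrix Q\<close>
   \<and> (\<exists>Q. linear Q \<and> (\<forall>s t u v. 0 \<le> s \<and> s \<le> t \<longrightarrow>
        real_gaussian M (\<lambda>\<omega>. inner (b t \<omega> - b s \<omega>) u) \<and>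
        integrable M (\<lambda>\<omega>. inner (b t \<omega> - b s \<omega>) u * inner (b t \<omega> - b s \<omega>) v) \<and>
        prob_space.expectation M (\<lambda>\<omega>. inner (b t \<omega> - b s \<omega>) u * inner (b t \<omega> - b s \<omega>) v)
          = (t - s) * inner u (Q v)))"

end

theory Submission
  imports Defs
begin

(* Forward direction.  Let X t = s_{B t} be a Brownian motion in Cbar.  Evaluating the
   support function at level 0 in the coordinate directions is a continuous linear
   functional, so the point b t of R^d with coordinates s_{B t}(0,i) - s_{B 0}(0,i) inherits
   from X joint Gaussianity, centering, independent increments and a covariance
   (t min s) Q; hence b is a Wiener process.  Moreover s(0,i) + s(0,-i) >= 0 is the width of
   the compact support in direction i, and it has expectation 0 since X is centered, so it
   vanishes a.s.; a fuzzy set of zero width in all coordinate directions is the indicator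
   of a point, and this point is b t.

   Backward direction.  If B t = 1_{b t} a.s., then s_{B t} is a.s. the linear function
   x |-> <x, b t>, and every dual functional f of Cbar satisfies f(s_{B t}) = <b t, v_f>
   a.s. for a fixed vector v_f.  All defining properties of a Brownian motion in Cbar then
   transfer from b; independence survives because it is insensitive to null sets, and
   measurability uses the completeness of the probability space. *)

section \<open>The space Cbar and its dual\<close>

lemma Cbar_bounded:
  "g \<in> Cbar \<Longrightarrow> \<exists>K. \<forall>\<alpha>\<in>{0..1}. \<forall>x\<in>sphere (0::'a::euclidean_space) 1. \<bar>g \<alpha> x\<bar> \<le> K"
  unfolding Cbar_def mem_Collect_eq by (elim conjE) assumption

lemma Cbar_le_norm:
  assumes "g \<in> Cbar" "\<alpha> \<in> {0..1}" "x \<in> sphere (0::'a::euclidean_space) 1"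
  shows "\<bar>g \<alpha> x\<bar> \<le> Cbar_norm g"
proof -
  obtain K where K: "\<forall>\<alpha>\<in>{0..1}. \<forall>x\<in>sphere (0::'a) 1. \<bar>g \<alpha> x\<bar> \<le> K"
    using Cbar_bounded[OF assms(1)] by blast
  have bdd: "bdd_above ((\<lambda>p. \<bar>g (fst p) (snd p)\<bar>) ` ({0..1} \<times> sphere (0::'a) 1))"
    by (rule bdd_aboveI2[where M=K]) (use K in auto)
  have "(\<alpha>, x) \<in> {0..1} \<times> sphere (0::'a) 1" using assms by simp
  from cSUP_upper[OF this bdd] show ?thesis unfolding Cbar_norm_def by simp
qed

lemma Cbar_vanishing:
  assumes z: "\<forall>\<alpha>\<in>{0..1}. \<forall>x\<in>sphere (0::'a::euclidean_space) 1. g \<alpha> x = 0"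
  shows "g \<in> Cbar" and "Cbar_norm g = 0"
proof -
  have "continuous_on (sphere (0::'a) 1) (g \<alpha>)" if "\<alpha> \<in> {0..1}" for \<alpha>
    using z that by (intro continuous_on_eq[OF continuous_on_const[of _ 0]]) auto
  then show "g \<in> Cbar"
    unfolding Cbar_def mem_Collect_eq using z
    by (intro conjI ballI allI impI exI[where x=0] exI[where x=1] exI[where x="\<lambda>x. 0"]) auto
  obtain i :: 'a where "i \<in> Basis" using nonempty_Basis by blast
  then have "(0, i) \<in> {0..1::real} \<times> sphere (0::'a) 1" by auto
  then have "(\<lambda>p. \<bar>g (fst p) (snd p)\<bar>) ` ({0..1} \<times> sphere (0::'a) 1) = {0}"
    using z by force
  then show "Cbar_norm g = 0" unfolding Cbar_norm_def by simp
qed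

lemma Cbar_dualI:
  fixes f :: "(real \<Rightarrow> 'a::euclidean_space \<Rightarrow> real) \<Rightarrow> real"
  assumes "\<And>g h. g \<in> Cbar \<Longrightarrow> h \<in> Cbar \<Longrightarrow> f (\<lambda>\<alpha> x. g \<alpha> x + h \<alpha> x) = f g + f h"
    and "\<And>g c. g \<in> Cbar \<Longrightarrow> f (\<lambda>\<alpha> x. c * g \<alpha> x) = c * f g"
    and "\<And>g. g \<in> Cbar \<Longrightarrow> \<bar>f g\<bar> \<le> K * Cbar_norm g"
  shows "f \<in> Cbar_dual"
  unfolding Cbar_dual_def using assms by blast

lemma Cbar_dual_add:
  "f \<in> Cbar_dual \<Longrightarrow> g \<in> Cbar \<Longrightarrow> h \<in> Cbar \<Longrightarrow> f (\<lambda>\<alpha> x. g \<alpha> x + h \<alpha> x) = f g + f h"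
  unfolding Cbar_dual_def by blast

lemma Cbar_dual_scale: "f \<in> Cbar_dual \<Longrightarrow> g \<in> Cbar \<Longrightarrow> f (\<lambda>\<alpha> x. c * g \<alpha> x) = c * f g"
  unfolding Cbar_dual_def by blast

lemma Cbar_dual_bounded:
  "f \<in> Cbar_dual \<Longrightarrow> \<exists>K. \<forall>g\<in>Cbar. \<bar>f g\<bar> \<le> K * Cbar_norm (g :: real \<Rightarrow> 'a::euclidean_space \<Rightarrow> real)"
  unfolding Cbar_dual_def by blast

lemma Cbar_dual_cong:
  assumes f: "f \<in> Cbar_dual" and h: "h \<in> Cbar"
    and agree: "\<forall>\<alpha>\<in>{0..1}. \<forall>x\<in>sphere (0::'a::euclidean_space) 1. g \<alpha> x = h \<alpha> x"
  shows "f g = f h"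
proof -
  define d where "d = (\<lambda>\<alpha> x. g \<alpha> x - h \<alpha> x)"
  have dz: "\<forall>\<alpha>\<in>{0..1}. \<forall>x\<in>sphere (0::'a) 1. d \<alpha> x = 0" using agree by (simp add: d_def)
  note d = Cbar_vanishing[OF dz]
  have "g = (\<lambda>\<alpha> x. h \<alpha> x + d \<alpha> x)" by (simp add: d_def)
  then have "f g = f h + f d" using Cbar_dual_add[OF f h d(1)] by simp
  moreover obtain K where "\<forall>g\<in>Cbar. \<bar>f g\<bar> \<le> K * Cbar_norm g" using Cbar_dual_bounded[OF f] by blast
  then have "f d = 0" using d by force
  ultimately show ?thesis by simp
qed

text \<open>The support function of the crisp point c: it does not depend on the level.\<close>
definition point_supp :: "'a::euclidean_space \<Rightarrow> real \<Rightarrow> 'a \<Rightarrow> real" where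
  "point_supp c = (\<lambda>\<alpha> x. inner x c)"

lemma point_supp_Cbar: "point_supp c \<in> Cbar"
proof -
  have "\<bar>inner x c\<bar> \<le> norm c" if "x \<in> sphere (0::'a) 1" for x
    using that Cauchy_Schwarz_ineq2[of x c] by simp
  then show ?thesis
    unfolding Cbar_def mem_Collect_eq point_supp_def
    by (intro conjI ballI allI impI exI[where x="norm c"] exI[where x=1]
          exI[where x="\<lambda>x. inner x c"]) (auto intro!: continuous_intros)
qed

text \<open>The vector representing a dual functional on the crisp points (see the next lemma).\<close>
definition dual_vec :: "((real \<Rightarrow> 'a \<Rightarrow> real) \<Rightarrow> real) \<Rightarrow> 'a::euclidean_space" where
  "dual_vec f = (\<Sum>i\<in>Basis. f (point_supp i) *\<^sub>R i)"

text \<open>Restricted to crisp points a dual functional is linear in the point, hence an inner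
  product with a fixed vector.\<close>
lemma point_supp_dual:
  assumes f: "f \<in> Cbar_dual"
  shows "f (point_supp p) = inner p (dual_vec f)"
proof -
  have add: "f (point_supp (x + y)) = f (point_supp x) + f (point_supp y)" for x y
  proof -
    have "point_supp (x + y) = (\<lambda>\<alpha> z. point_supp x \<alpha> z + point_supp y \<alpha> z)"
      by (simp add: point_supp_def inner_add_right)
    then show ?thesis using Cbar_dual_add[OF f point_supp_Cbar point_supp_Cbar] by simp
  qed
  have scale: "f (point_supp (r *\<^sub>R x)) = r * f (point_supp x)" for r x
  proof -
    have "point_supp (r *\<^sub>R x) = (\<lambda>\<alpha> z. r * point_supp x \<alpha> z)" by (simp add: point_supp_def)
    then show ?thesis using Cbar_dual_scale[OF f point_supp_Cbar] by simp
  qed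
  have lin: "linear (\<lambda>p. f (point_supp p))" by (rule linearI) (simp_all add: add scale)
  have "f (point_supp p) = f (point_supp (\<Sum>i\<in>Basis. inner p i *\<^sub>R i))"
    by (simp add: euclidean_representation)
  also have "\<dots> = (\<Sum>i\<in>Basis. inner p i * f (point_supp i))"
    by (simp add: linear_sum[OF lin] scale)
  also have "\<dots> = inner p (dual_vec f)" by (simp add: dual_vec_def inner_sum_right mult.commute)
  finally show ?thesis .
qed

text \<open>Finite weighted point evaluations of the support function at level 0 are continuous
  linear functionals; they give access to the individual coordinates.\<close>
definition eval0 :: "'a set \<Rightarrow> ('a \<Rightarrow> real) \<Rightarrow> (real \<Rightarrow> 'a::euclidean_space \<Rightarrow> real) \<Rightarrow> real" where
  "eval0 J w g = (\<Sum>x\<in>J. w x * g 0 x)"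

lemma eval0_dual:
  fixes J :: "'a::euclidean_space set"
  assumes "finite J" "J \<subseteq> sphere 0 1"
  shows "eval0 J w \<in> Cbar_dual"
proof (rule Cbar_dualI)
  fix g :: "real \<Rightarrow> 'a \<Rightarrow> real" assume g: "g \<in> Cbar"
  have "\<bar>eval0 J w g\<bar> \<le> (\<Sum>x\<in>J. \<bar>w x * g 0 x\<bar>)" unfolding eval0_def by (rule sum_abs)
  also have "\<dots> \<le> (\<Sum>x\<in>J. \<bar>w x\<bar> * Cbar_norm g)"
    by (rule sum_mono) (use Cbar_le_norm[OF g] assms in \<open>auto simp: abs_mult intro!: mult_left_mono\<close>)
  finally show "\<bar>eval0 J w g\<bar> \<le> (\<Sum>x\<in>J. \<bar>w x\<bar>) * Cbar_norm g" by (simp add: sum_distrib_right)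
qed (simp_all add: eval0_def algebra_simps sum.distrib sum_distrib_left)

definition point_eval :: "'a \<Rightarrow> (real \<Rightarrow> 'a::euclidean_space \<Rightarrow> real) \<Rightarrow> real" where
  "point_eval x = eval0 {x} (\<lambda>_. 1)"

definition coord_eval :: "'a \<Rightarrow> (real \<Rightarrow> 'a::euclidean_space \<Rightarrow> real) \<Rightarrow> real" where
  "coord_eval v = eval0 Basis (\<lambda>j. inner v j)"

lemma point_eval_apply [simp]: "point_eval x g = g 0 x"
  by (simp add: point_eval_def eval0_def)

lemma point_eval_dual: "norm x = 1 \<Longrightarrow> point_eval x \<in> Cbar_dual"
  unfolding point_eval_def by (rule eval0_dual) auto

lemma coord_eval_dual: "coord_eval v \<in> Cbar_dual"
  unfolding coord_eval_def by (rule eval0_dual) auto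

lemma coord_eval_apply: "coord_eval v g = (\<Sum>j\<in>Basis. inner v j * g 0 j)"
  by (simp add: coord_eval_def eval0_def)

lemma coord_eval_Basis:
  assumes i: "i \<in> Basis" shows "coord_eval i g = g 0 i"
proof -
  have "(\<Sum>j\<in>Basis. inner i j * g 0 j) = (\<Sum>j\<in>Basis. if j = i then g 0 j else 0)"
    by (rule sum.cong) (use i in \<open>auto simp: inner_Basis\<close>)
  then show ?thesis using i by (simp add: coord_eval_apply sum.delta)
qed

lemma coord_eval_add: "coord_eval (u + v) g = coord_eval u g + coord_eval v g"
  by (simp add: coord_eval_apply inner_add_left distrib_right sum.distrib)

lemma coord_eval_scale: "coord_eval (r *\<^sub>R u) g = r * coord_eval u g"
  by (simp add: coord_eval_apply sum_distrib_left mult.assoc)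

lemma coord_eval_expand: "(\<Sum>i\<in>Basis. inner u i * coord_eval i g) = coord_eval u g"
proof -
  have "(\<Sum>i\<in>Basis. inner u i * coord_eval i g) = (\<Sum>i\<in>Basis. inner u i * g 0 i)"
    by (rule sum.cong) (simp_all add: coord_eval_Basis)
  then show ?thesis by (simp add: coord_eval_apply)
qed

section \<open>Crisp points among the fuzzy sets\<close>

text \<open>The indicator of a point has that point as every level set, so its support function
  is the crisp-point support function.\<close>
lemma level_indicator:
  assumes "\<alpha> \<in> {0..1}"
  shows "level (indicator {p} :: 'a::euclidean_space \<Rightarrow> real) \<alpha> = {p}"
proof (cases "\<alpha> = 0")
  case True
  have "{x. (indicator {p} x :: real) > 0} = {p}" by (auto simp: indicator_def)
  then show ?thesis using True by (simp add: level_def)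
next
  case False
  then have "{x. (indicator {p} x :: real) \<ge> \<alpha>} = {p}" using assms by (auto simp: indicator_def)
  then show ?thesis using False by (simp add: level_def)
qed

lemma supp_fun_indicator:
  "\<alpha> \<in> {0..1} \<Longrightarrow> supp_fun (indicator {p} :: 'a::euclidean_space \<Rightarrow> real) \<alpha> x = point_supp p \<alpha> x"
  unfolding supp_fun_def point_supp_def by (simp add: level_indicator)

lemma level_one_subset_support: "level \<nu> 1 \<subseteq> level (\<nu>::'a::euclidean_space \<Rightarrow> real) 0"
  by (auto simp: level_def closure_def)

lemma inner_le_supp_fun0:
  assumes "Fkc \<nu>" "a \<in> level (\<nu>::'a::euclidean_space \<Rightarrow> real) 0"
  shows "inner x a \<le> supp_fun \<nu> 0 x"
proof -
  have "compact (level \<nu> 0)" using assms(1) unfolding Fkc_def by blast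
  then have "compact ((\<lambda>a. inner x a) ` level \<nu> 0)"
    by (rule compact_continuous_image[rotated]) (intro continuous_intros)
  then have "bdd_above ((\<lambda>a. inner x a) ` level \<nu> 0)"
    by (intro bounded_imp_bdd_above compact_imp_bounded)
  then show ?thesis unfolding supp_fun_def using assms(2) by (rule cSUP_upper2) simp
qed

lemma supp_fun0_width_nonneg:
  assumes "Fkc \<nu>"
  shows "0 \<le> supp_fun (\<nu>::'a::euclidean_space \<Rightarrow> real) 0 x + supp_fun \<nu> 0 (-x)"
proof -
  obtain a where a: "a \<in> level \<nu> 0"
    using assms level_one_subset_support[of \<nu>] unfolding Fkc_def by blast
  show ?thesis
    using inner_le_supp_fun0[OF assms a, of x] inner_le_supp_fun0[OF assms a, of "-x"] by simp
qed

lemma Fkc_zero_width_indicator: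
  assumes F: "Fkc \<nu>" and W: "\<forall>i\<in>Basis. supp_fun \<nu> 0 i + supp_fun \<nu> 0 (-i) = 0"
  shows "(\<nu>::'a::euclidean_space \<Rightarrow> real) = indicator {\<Sum>i\<in>Basis. supp_fun \<nu> 0 i *\<^sub>R i}"
proof -
  define c where "c = (\<Sum>i\<in>Basis. supp_fun \<nu> 0 i *\<^sub>R i)"
  have support: "a = c" if a: "a \<in> level \<nu> 0" for a
  proof -
    have "inner a i = supp_fun \<nu> 0 i" if i: "i \<in> Basis" for i
      using inner_le_supp_fun0[OF F a, of i] inner_le_supp_fun0[OF F a, of "-i"] W i
      by (auto simp: inner_commute)
    then have "(\<Sum>i\<in>Basis. inner a i *\<^sub>R i) = c" unfolding c_def by simp
    then show ?thesis by (simp add: euclidean_representation)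
  qed
  have "\<nu> c = 1"
  proof -
    obtain y where y: "y \<in> level \<nu> 1" using F unfolding Fkc_def by blast
    then have "y = c" using support level_one_subset_support by blast
    then have "\<nu> c \<ge> 1" using y by (simp add: level_def)
    moreover have "\<nu> c \<le> 1" using F unfolding Fkc_def by blast
    ultimately show ?thesis by simp
  qed
  moreover have "\<nu> x = 0" if "x \<noteq> c" for x
  proof (rule ccontr)
    assume "\<nu> x \<noteq> 0"
    moreover have "\<nu> x \<ge> 0" using F unfolding Fkc_def by blast
    ultimately have "\<nu> x > 0" by simp
    then have "x \<in> level \<nu> 0" by (simp add: level_def closure_def)
    then show False using support that by blast
  qed
  ultimately show ?thesis unfolding c_def[symmetric] by (auto simp: indicator_def)
qed

section \<open>Probabilistic preliminaries\<close>

text \<open>Being Gaussian only depends on the distribution, so it is stable under a.s. equality.\<close>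
lemma real_gaussian_AE:
  assumes "real_gaussian M X" "Y \<in> borel_measurable M" "AE \<omega> in M. X \<omega> = Y \<omega>"
  shows "real_gaussian M Y"
proof -
  have X: "X \<in> borel_measurable M" using assms(1) unfolding real_gaussian_def by blast
  have d1: "distr M borel X = distr M borel Y" by (rule distr_cong_AE) (use assms X in auto)
  have d2: "distr M lborel X = distr M lborel Y" by (rule distr_cong_AE) (use assms X in auto)
  have "Y \<in> measurable M lborel" using assms(2) by simp
  then show ?thesis using assms(1,2) unfolding real_gaussian_def distributed_def d1 d2 by blast
qed

lemma gaussian_familyD:
  "gaussian_family M I Z \<Longrightarrow> real_gaussian M (\<lambda>\<omega>. \<Sum>i\<in>I. c i * Z i \<omega>)"
  "gaussian_family M I Z \<Longrightarrow> i \<in> I \<Longrightarrow> Z i \<in> borel_measurable M"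
  unfolding gaussian_family_def by blast+

lemma gaussian_family_AE:
  assumes "gaussian_family M I Z" "finite I" "\<And>i. i \<in> I \<Longrightarrow> Z' i \<in> borel_measurable M"
    and "AE \<omega> in M. \<forall>i\<in>I. Z i \<omega> = Z' i \<omega>"
  shows "gaussian_family M I Z'"
  unfolding gaussian_family_def
proof (intro conjI ballI allI)
  fix c
  show "real_gaussian M (\<lambda>\<omega>. \<Sum>i\<in>I. c i * Z' i \<omega>)"
    by (rule real_gaussian_AE[OF gaussian_familyD(1)[OF assms(1)]]) (use assms(3,4) in \<open>auto elim!: eventually_mono\<close>)
qed (use assms(3) in blast)

lemma gaussian_family_reindex:
  assumes "gaussian_family M J (\<lambda>j. Z (h j))" "bij_betw h J I"
  shows "gaussian_family M I Z"
  unfolding gaussian_family_def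
proof (intro conjI ballI allI)
  show "Z i \<in> borel_measurable M" if "i \<in> I" for i
    using gaussian_familyD(2)[OF assms(1)] assms(2) that unfolding bij_betw_def by blast
  fix c
  have "(\<Sum>j\<in>J. c (h j) * Z (h j) \<omega>) = (\<Sum>i\<in>I. c i * Z i \<omega>)" for \<omega>
    by (rule sum.reindex_bij_betw[OF assms(2)])
  with gaussian_familyD(1)[OF assms(1), of "\<lambda>j. c (h j)"]
  show "real_gaussian M (\<lambda>\<omega>. \<Sum>i\<in>I. c i * Z i \<omega>)" by simp
qed

lemma gaussian_vec_process_measurable:
  assumes "gaussian_vec_process M n Y" "t \<ge> 0" "k < n"
  shows "Y t k \<in> borel_measurable M"
proof -
  have "gaussian_family M ({t} \<times> {..<n}) (\<lambda>(t,k). Y t k)"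
    using assms unfolding gaussian_vec_process_def by auto
  from gaussian_familyD(2)[OF this, of "(t,k)"] show ?thesis using assms by simp
qed

lemma gaussian_vec_process_increment:
  assumes "gaussian_vec_process M 1 Y" "s \<ge> 0" "t \<ge> 0"
  shows "real_gaussian M (\<lambda>\<omega>. Y t 0 \<omega> - Y s 0 \<omega>)"
proof -
  have "gaussian_family M ({s,t} \<times> {..<1}) (\<lambda>(t,k). Y t k)"
    using assms unfolding gaussian_vec_process_def by auto
  from gaussian_familyD(1)[OF this,
      of "\<lambda>p. (if p = (t,0) then 1 else 0) - (if p = (s,0) then 1 else 0)"]
  have "real_gaussian M (\<lambda>\<omega>. \<Sum>p\<in>{s,t} \<times> {..<1}.
      ((if p = (t,0) then 1 else 0) - (if p = (s,0) then 1 else 0)) * (\<lambda>(t,k). Y t k) p \<omega>)"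
    by simp
  moreover have "{s,t} \<times> {..<1::nat} = {(s,0),(t,0)}" by auto
  ultimately show ?thesis by (cases "s = t") simp_all
qed

lemma measurable_AE_complete:
  fixes f g :: "'w \<Rightarrow> real"
  assumes "complete_measure M" "g \<in> borel_measurable M" "AE x in M. f x = g x"
  shows "f \<in> borel_measurable M"
proof (rule measurableI)
  fix A :: "real set" assume A: "A \<in> sets borel"
  have "g -` A \<inter> space M \<in> sets M" using assms(2) A by (rule measurable_sets)
  moreover have "AE x in M. x \<in> g -` A \<inter> space M \<longleftrightarrow> x \<in> f -` A \<inter> space M"
    using assms(3) by (auto elim!: eventually_mono)
  ultimately show "f -` A \<inter> space M \<in> sets M"
    using complete_measure.in_sets_AE[OF assms(1)] by blast
qed simp

context prob_space
begin

definition AE_closure :: "'a set set \<Rightarrow> 'a set set" where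
  "AE_closure F = {A \<in> events. \<exists>A'\<in>F. AE \<omega> in M. (\<omega> \<in> A) = (\<omega> \<in> A')}"

lemma indep_sets_AE_closure:
  assumes IF: "indep_sets F I"
  shows "indep_sets (\<lambda>k. AE_closure (F k)) I"
proof (rule indep_setsI)
  show "AE_closure (F k) \<subseteq> events" for k unfolding AE_closure_def by auto
  fix A J assume J: "J \<noteq> {}" "J \<subseteq> I" "finite J" and A: "\<forall>j\<in>J. A j \<in> AE_closure (F j)"
  then have "\<forall>j\<in>J. \<exists>A'. A' \<in> F j \<and> (AE \<omega> in M. (\<omega> \<in> A j) = (\<omega> \<in> A'))"
    unfolding AE_closure_def by blast
  then obtain A' where A': "\<And>j. j \<in> J \<Longrightarrow> A' j \<in> F j \<and> (AE \<omega> in M. (\<omega> \<in> A j) = (\<omega> \<in> A' j))"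
    by metis
  have Aev: "A j \<in> events" if "j \<in> J" for j using A that unfolding AE_closure_def by blast
  have A'ev: "A' j \<in> events" if "j \<in> J" for j
    using A' IF J(2) that unfolding indep_sets_def by blast
  have "prob (\<Inter>j\<in>J. A j) = prob (\<Inter>j\<in>J. A' j)"
  proof (rule measure_eq_AE)
    have "AE \<omega> in M. \<forall>j\<in>J. (\<omega> \<in> A j) = (\<omega> \<in> A' j)"
      by (rule AE_finite_allI[OF J(3)]) (use A' in blast)
    then show "AE \<omega> in M. (\<omega> \<in> (\<Inter>j\<in>J. A j)) = (\<omega> \<in> (\<Inter>j\<in>J. A' j))"
      by (auto elim!: eventually_mono)
  qed (use J Aev A'ev in \<open>auto intro!: sets.finite_INT\<close>)
  also have "\<dots> = (\<Prod>j\<in>J. prob (A' j))"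
    by (rule indep_setsD[OF IF J(2) J(1) J(3)]) (use A' in blast)
  also have "\<dots> = (\<Prod>j\<in>J. prob (A j))"
  proof (rule prod.cong[OF refl])
    fix j assume j: "j \<in> J"
    show "prob (A' j) = prob (A j)"
      using A'[OF j] Aev[OF j] A'ev[OF j] by (intro measure_eq_AE) (auto elim!: eventually_mono)
  qed
  finally show "prob (\<Inter>j\<in>J. A j) = (\<Prod>j\<in>J. prob (A j))" .
qed

lemma sigma_algebra_AE_closure:
  assumes F: "sigma_algebra (space M) F"
  shows "sigma_algebra (space M) (AE_closure F)"
proof -
  interpret F: sigma_algebra "space M" F by (rule F)
  show ?thesis
    unfolding sigma_algebra_iff2
  proof (intro conjI ballI allI impI)
  show "AE_closure F \<subseteq> Pow (space M)" unfolding AE_closure_def using sets.sets_into_space by auto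
  show "{} \<in> AE_closure F"
    unfolding AE_closure_def by auto
next
  fix s assume "s \<in> AE_closure F"
  then obtain A' where s: "s \<in> events" "A' \<in> F" "AE \<omega> in M. (\<omega> \<in> s) = (\<omega> \<in> A')"
    unfolding AE_closure_def by blast
  have "space M - A' \<in> F" using s(2) by (rule F.compl_sets)
  moreover have "AE \<omega> in M. (\<omega> \<in> space M - s) = (\<omega> \<in> space M - A')"
    using s(3) AE_space by eventually_elim auto
  ultimately show "space M - s \<in> AE_closure F" unfolding AE_closure_def using s(1) by blast
next
  fix A :: "nat \<Rightarrow> 'a set" assume "range A \<subseteq> AE_closure F"
  then have "\<forall>i. \<exists>A'. A i \<in> events \<and> A' \<in> F \<and> (AE \<omega> in M. (\<omega> \<in> A i) = (\<omega> \<in> A'))"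
    unfolding AE_closure_def by blast
  then obtain A' where A': "\<And>i. A i \<in> events \<and> A' i \<in> F \<and> (AE \<omega> in M. (\<omega> \<in> A i) = (\<omega> \<in> A' i))"
    by metis
  have "(\<Union>i. A' i) \<in> F" using A' by (intro F.countable_UN) auto
  moreover have "AE \<omega> in M. \<forall>i. (\<omega> \<in> A i) = (\<omega> \<in> A' i)" unfolding AE_all_countable using A' by blast
  then have "AE \<omega> in M. (\<omega> \<in> (\<Union>i. A i)) = (\<omega> \<in> (\<Union>i. A' i))" by (auto elim!: eventually_mono)
  moreover have "(\<Union>i. A i) \<in> events" using A' by auto
  ultimately show "(\<Union>i. A i) \<in> AE_closure F" unfolding AE_closure_def by blast
qed
qed

lemma indep_sets_AE_generators:
  assumes "indep_sets F I" "\<And>k. k \<in> I \<Longrightarrow> sigma_algebra (space M) (F k)"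
    and "\<And>k. k \<in> I \<Longrightarrow> G k \<subseteq> AE_closure (F k)"
  shows "indep_sets (\<lambda>k. sigma_sets (space M) (G k)) I"
proof (rule indep_sets_mono_sets[OF indep_sets_AE_closure[OF assms(1)]])
  fix k assume "k \<in> I"
  then show "sigma_sets (space M) (G k) \<subseteq> AE_closure (F k)"
    using sigma_algebra.sigma_sets_subset[OF sigma_algebra_AE_closure] assms(2,3) by blast
qed

end

lemma increasing_times_nonneg:
  fixes t :: "nat \<Rightarrow> real"
  assumes "0 \<le> t 0" "\<forall>k<n. t k < t (Suc k)" "k \<le> n"
  shows "0 \<le> t k"
  using assms(3)
proof (induction k)
  case (Suc k)
  then show ?case using assms(1,2) by (meson Suc_le_lessD less_eq_real_def order.trans order_less_imp_le)
qed (use assms in simp)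


section \<open>From a Brownian motion in Cbar to a Wiener process\<close>

definition level0_trace ::
  "(real \<Rightarrow> 'w \<Rightarrow> real \<Rightarrow> 'a \<Rightarrow> real) \<Rightarrow> real \<Rightarrow> 'w \<Rightarrow> 'a::euclidean_space" where
  "level0_trace X t \<omega> = (\<Sum>i\<in>Basis. (X t \<omega> 0 i - X 0 \<omega> 0 i) *\<^sub>R i)"

lemma inner_level0_trace:
  "inner (level0_trace X t \<omega>) v = coord_eval v (X t \<omega>) - coord_eval v (X 0 \<omega>)"
proof -
  have "inner (level0_trace X t \<omega>) v = (\<Sum>i\<in>Basis. (X t \<omega> 0 i - X 0 \<omega> 0 i) * inner i v)"
    by (simp add: level0_trace_def inner_sum_left)
  also have "\<dots> = (\<Sum>i\<in>Basis. inner v i * X t \<omega> 0 i) - (\<Sum>i\<in>Basis. inner v i * X 0 \<omega> 0 i)"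
    by (simp add: sum_subtractf[symmetric] algebra_simps inner_commute)
  finally show ?thesis by (simp add: coord_eval_apply)
qed

lemma inner_level0_trace_increment:
  "inner (level0_trace X t \<omega> - level0_trace X s \<omega>) u = coord_eval u (X t \<omega>) - coord_eval u (X s \<omega>)"
  by (simp add: inner_diff_left inner_level0_trace)

locale Cbar_brownian = prob_space M for M :: "'w measure" +
  fixes X :: "real \<Rightarrow> 'w \<Rightarrow> real \<Rightarrow> 'a::euclidean_space \<Rightarrow> real"
  assumes Cbar_BM: "Cbar_BM M X"
begin

abbreviation b :: "real \<Rightarrow> 'w \<Rightarrow> 'a" where "b \<equiv> level0_trace X"

lemma gaussian: "(\<And>k. k < n \<Longrightarrow> fs k \<in> Cbar_dual) \<Longrightarrow> gaussian_vec_process M n (\<lambda>t k \<omega>. fs k (X t \<omega>))"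
  using Cbar_BM[unfolded Cbar_BM_def, THEN conjunct1] by blast

lemma start: "AE \<omega> in M. \<forall>\<alpha>\<in>{0..1}. \<forall>x\<in>sphere 0 1. X 0 \<omega> \<alpha> x = 0"
  using Cbar_BM[unfolded Cbar_BM_def] by (elim conjE)

lemma centered:
  "f \<in> Cbar_dual \<Longrightarrow> t \<ge> 0 \<Longrightarrow> integrable M (\<lambda>\<omega>. f (X t \<omega>)) \<and> expectation (\<lambda>\<omega>. f (X t \<omega>)) = 0"
  using Cbar_BM[unfolded Cbar_BM_def, THEN conjunct2, THEN conjunct2, THEN conjunct1] by blast

lemma indep_increments:
  "0 \<le> t 0 \<Longrightarrow> (\<forall>k<n. t k < t (Suc k)) \<Longrightarrow>
    indep_sets (\<lambda>k. sigma_sets (space M)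
      {(\<lambda>\<omega>. f (\<lambda>\<alpha> x. X (t (Suc k)) \<omega> \<alpha> x - X (t k) \<omega> \<alpha> x)) -` A \<inter> space M | f A.
         f \<in> Cbar_dual \<and> A \<in> sets borel}) {..<n}"
  using Cbar_BM[unfolded Cbar_BM_def, THEN conjunct2, THEN conjunct2, THEN conjunct2, THEN conjunct1]
  by blast

lemma covariance:
  obtains R where "\<And>f g s t. f \<in> Cbar_dual \<Longrightarrow> g \<in> Cbar_dual \<Longrightarrow> s \<ge> 0 \<Longrightarrow> t \<ge> 0 \<Longrightarrow>
    integrable M (\<lambda>\<omega>. f (X t \<omega>) * g (X s \<omega>)) \<and>
    expectation (\<lambda>\<omega>. f (X t \<omega>) * g (X s \<omega>)) = min t s * R f g"
  using Cbar_BM[unfolded Cbar_BM_def, THEN conjunct2, THEN conjunct2, THEN conjunct2, THEN conjunct2]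
  by blast

lemma measurable_dual: "f \<in> Cbar_dual \<Longrightarrow> t \<ge> 0 \<Longrightarrow> (\<lambda>\<omega>. f (X t \<omega>)) \<in> borel_measurable M"
  using gaussian_vec_process_measurable[OF gaussian[of 1 "\<lambda>_. f"], of t 0] by simp

lemma trace_measurable: "t \<ge> 0 \<Longrightarrow> b t \<in> borel_measurable M"
  unfolding level0_trace_def
  by (intro borel_measurable_sum borel_measurable_scaleR borel_measurable_diff borel_measurable_const)
     (use measurable_dual[OF point_eval_dual] in auto)

lemma trace_inner_measurable: "t \<ge> 0 \<Longrightarrow> (\<lambda>\<omega>. inner (b t \<omega>) v) \<in> borel_measurable M"
  unfolding inner_level0_trace by (intro borel_measurable_diff measurable_dual coord_eval_dual) auto

lemma trace_centered:
  assumes "t \<ge> 0"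
  shows "integrable M (\<lambda>\<omega>. inner (b t \<omega>) v) \<and> expectation (\<lambda>\<omega>. inner (b t \<omega>) v) = 0"
  using centered[OF coord_eval_dual[of v] assms] centered[OF coord_eval_dual[of v], where t=0]
  unfolding inner_level0_trace by simp

text \<open>Since X starts at 0, the coordinates of the trace are a.s. the level-0 evaluations.\<close>
lemma trace_coordinates_AE: "AE \<omega> in M. \<forall>t. \<forall>i\<in>Basis. inner (b t \<omega>) i = X t \<omega> 0 i"
  using start by eventually_elim (auto simp: inner_level0_trace coord_eval_Basis)

text \<open>The coordinates of the trace are jointly Gaussian: up to a null set they are level-0
  point evaluations, one dual functional per basis vector.\<close>
lemma trace_gaussian_family:
  assumes S: "finite S" "S \<subseteq> {0..}"
  shows "gaussian_family M (S \<times> Basis) (\<lambda>(t,i) \<omega>. inner (b t \<omega>) i)"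
proof -
  obtain e where e: "bij_betw e {..<DIM('a)} (Basis::'a set)"
    using ex_bij_betw_nat_finite[of "Basis::'a set"] by (auto simp: atLeast0LessThan)
  then have "e k \<in> Basis" if "k < DIM('a)" for k
    using that by (auto simp: bij_betw_def)
  then have "norm (e k) = 1" if "k < DIM('a)" for k
    using that by (simp add: norm_Basis)
  then have "gaussian_vec_process M DIM('a) (\<lambda>t k \<omega>. point_eval (e k) (X t \<omega>))"
    by (intro gaussian point_eval_dual)
  then have "gaussian_family M (S \<times> {..<DIM('a)}) (\<lambda>p \<omega>. X (fst p) \<omega> 0 (e (snd p)))"
    using S unfolding gaussian_vec_process_def by (simp add: case_prod_beta')
  moreover have "bij_betw (map_prod id e) (S \<times> {..<DIM('a)}) (S \<times> Basis)"
    by (rule bij_betw_map_prod[OF bij_betw_id e])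
  ultimately have "gaussian_family M (S \<times> Basis) (\<lambda>p \<omega>. X (fst p) \<omega> 0 (snd p))"
    by (intro gaussian_family_reindex[where h="map_prod id e"]) (simp_all add: map_prod_def case_prod_beta')
  then show ?thesis
  proof (rule gaussian_family_AE)
    show "(case p of (t, i) \<Rightarrow> \<lambda>\<omega>. inner (b t \<omega>) i) \<in> borel_measurable M" if "p \<in> S \<times> Basis" for p
      using that S trace_inner_measurable by (auto split: prod.split)
    show "AE \<omega> in M. \<forall>p\<in>S \<times> Basis. X (fst p) \<omega> 0 (snd p) = (case p of (t, i) \<Rightarrow> \<lambda>\<omega>. inner (b t \<omega>) i) \<omega>"
      using trace_coordinates_AE by eventually_elim auto
  qed (use S in auto)
qed

lemma trace_increment_measurable:
  "(\<lambda>\<omega>. b t' \<omega> - b t \<omega>) \<in> borel_measurable (sigma (space M)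
     {(\<lambda>\<omega>. f (\<lambda>\<alpha> x. X t' \<omega> \<alpha> x - X t \<omega> \<alpha> x)) -` A \<inter> space M | f A. f \<in> Cbar_dual \<and> A \<in> sets borel})"
  (is "_ \<in> borel_measurable (sigma (space M) ?G)")
proof -
  have sets_sigma: "sets (sigma (space M) ?G) = sigma_sets (space M) ?G"
    by (rule sets_measure_of) auto
  have coordinate: "(\<lambda>\<omega>. X t' \<omega> 0 i - X t \<omega> 0 i) \<in> borel_measurable (sigma (space M) ?G)"
    if i: "i \<in> Basis" for i
  proof (rule measurableI)
    fix A :: "real set" assume "A \<in> sets borel"
    then have "(\<lambda>\<omega>. X t' \<omega> 0 i - X t \<omega> 0 i) -` A \<inter> space M \<in> ?G"
      using point_eval_dual[of i] i by (intro CollectI exI[of _ "point_eval i"] exI[of _ A]) simp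
    then show "(\<lambda>\<omega>. X t' \<omega> 0 i - X t \<omega> 0 i) -` A \<inter> space (sigma (space M) ?G) \<in> sets (sigma (space M) ?G)"
      unfolding sets_sigma space_measure_of_conv by (rule sigma_sets.Basic)
  qed simp
  have "(\<lambda>\<omega>. b t' \<omega> - b t \<omega>) = (\<lambda>\<omega>. \<Sum>i\<in>Basis. (X t' \<omega> 0 i - X t \<omega> 0 i) *\<^sub>R i)"
    by (simp add: level0_trace_def fun_eq_iff sum_subtractf[symmetric] algebra_simps)
  then show ?thesis
    by (simp add: borel_measurable_sum borel_measurable_scaleR coordinate)
qed

lemma trace_indep_increments:
  assumes t: "0 \<le> t 0" "\<forall>k<n. t k < t (Suc k)"
  shows "indep_vars (\<lambda>_. borel) (\<lambda>k \<omega>. b (t (Suc k)) \<omega> - b (t k) \<omega>) {..<n}"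
  unfolding indep_vars_def
proof (intro conjI ballI)
  show "random_variable borel (\<lambda>\<omega>. b (t (Suc k)) \<omega> - b (t k) \<omega>)" if "k \<in> {..<n}" for k
    using that increasing_times_nonneg[OF t] by (intro borel_measurable_diff trace_measurable) auto
  show "indep_sets (\<lambda>k. sigma_sets (space M)
      {(\<lambda>\<omega>. b (t (Suc k)) \<omega> - b (t k) \<omega>) -` A \<inter> space M | A. A \<in> sets borel}) {..<n}"
  proof (rule indep_sets_mono_sets[OF indep_increments[OF t]], rule sigma_sets_mono)
    fix k
    let ?G = "{(\<lambda>\<omega>. f (\<lambda>\<alpha> x. X (t (Suc k)) \<omega> \<alpha> x - X (t k) \<omega> \<alpha> x)) -` A \<inter> space M | f A.
          f \<in> Cbar_dual \<and> A \<in> sets borel}"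
    have "sets (sigma (space M) ?G) = sigma_sets (space M) ?G" by (rule sets_measure_of) auto
    with measurable_sets[OF trace_increment_measurable[of "t (Suc k)" "t k"]]
    show "{(\<lambda>\<omega>. b (t (Suc k)) \<omega> - b (t k) \<omega>) -` A \<inter> space M | A. A \<in> sets borel} \<subseteq>
        sigma_sets (space M) ?G"
      by (auto simp: space_measure_of_conv)
  qed
qed

text \<open>The covariance of the trace: the fixed covariance R of X restricted to the coordinate
  functionals defines a linear map Q.\<close>
lemma trace_covariance:
  "\<exists>Q. linear Q \<and> (\<forall>s t u v. 0 \<le> s \<and> s \<le> t \<longrightarrow>
      integrable M (\<lambda>\<omega>. inner (b t \<omega> - b s \<omega>) u * inner (b t \<omega> - b s \<omega>) v) \<and>
      expectation (\<lambda>\<omega>. inner (b t \<omega> - b s \<omega>) u * inner (b t \<omega> - b s \<omega>) v) = (t - s) * inner u (Q v))"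
proof -
  obtain R where R: "\<And>f g s t. f \<in> Cbar_dual \<Longrightarrow> g \<in> Cbar_dual \<Longrightarrow> s \<ge> 0 \<Longrightarrow> t \<ge> 0 \<Longrightarrow>
      integrable M (\<lambda>\<omega>. f (X t \<omega>) * g (X s \<omega>)) \<and>
      expectation (\<lambda>\<omega>. f (X t \<omega>) * g (X s \<omega>)) = min t s * R f g"
    using covariance by blast
  let ?L = coord_eval
  have RI: "integrable M (\<lambda>\<omega>. ?L u (X t \<omega>) * ?L v (X s \<omega>))" if "s \<ge> 0" "t \<ge> 0" for u v s t
    using R[OF coord_eval_dual coord_eval_dual that] by blast
  have RE: "expectation (\<lambda>\<omega>. ?L u (X t \<omega>) * ?L v (X s \<omega>)) = min t s * R (?L u) (?L v)"
    if "s \<ge> 0" "t \<ge> 0" for u v s t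
    using R[OF coord_eval_dual coord_eval_dual that] by blast
  have R1: "R (?L u) (?L v) = expectation (\<lambda>\<omega>. ?L u (X 1 \<omega>) * ?L v (X 1 \<omega>))" for u v
    using RE[of 1 1 u v] by simp
  define Q where "Q v = (\<Sum>i\<in>Basis. R (?L i) (?L v) *\<^sub>R i)" for v :: 'a
  have QR: "inner u (Q v) = R (?L u) (?L v)" for u v
  proof -
    have "inner u (Q v) = (\<Sum>i\<in>Basis. expectation (\<lambda>\<omega>. inner u i * (?L i (X 1 \<omega>) * ?L v (X 1 \<omega>))))"
      by (simp add: Q_def inner_sum_right R1 mult.commute)
    also have "\<dots> = expectation (\<lambda>\<omega>. \<Sum>i\<in>Basis. inner u i * (?L i (X 1 \<omega>) * ?L v (X 1 \<omega>)))"
      by (rule Bochner_Integration.integral_sum[symmetric]) (auto intro!: integrable_mult_right RI)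
    also have "\<dots> = R (?L u) (?L v)"
      by (simp add: sum_distrib_right[symmetric] mult.assoc[symmetric] coord_eval_expand R1)
    finally show ?thesis .
  qed
  have "linear Q"
  proof (rule linearI)
    have "R (?L i) (?L (x + y)) = R (?L i) (?L x) + R (?L i) (?L y)" for i x y
      unfolding R1 coord_eval_add distrib_left by (rule Bochner_Integration.integral_add) (auto intro: RI)
    then show "Q (x + y) = Q x + Q y" for x y
      by (simp add: Q_def scaleR_add_left sum.distrib)
    have "R (?L i) (?L (r *\<^sub>R x)) = r * R (?L i) (?L x)" for i r x
      unfolding R1 coord_eval_scale by (simp add: mult.left_commute)
    then show "Q (r *\<^sub>R x) = r *\<^sub>R Q x" for r x
      by (simp add: Q_def scaleR_sum_right)
  qed
  moreover have "integrable M (\<lambda>\<omega>. inner (b t \<omega> - b s \<omega>) u * inner (b t \<omega> - b s \<omega>) v) \<and>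
      expectation (\<lambda>\<omega>. inner (b t \<omega> - b s \<omega>) u * inner (b t \<omega> - b s \<omega>) v) = (t - s) * inner u (Q v)"
    if st: "0 \<le> s" "s \<le> t" for s t u v
  proof -
    have expand: "inner (b t \<omega> - b s \<omega>) u * inner (b t \<omega> - b s \<omega>) v =
        ?L u (X t \<omega>) * ?L v (X t \<omega>) - ?L u (X t \<omega>) * ?L v (X s \<omega>)
        - ?L u (X s \<omega>) * ?L v (X t \<omega>) + ?L u (X s \<omega>) * ?L v (X s \<omega>)" for \<omega>
      unfolding inner_level0_trace_increment by (simp add: algebra_simps)
    have "0 \<le> t" using st by simp
    note RI' = RI[OF st(1) this] RI[OF this this] RI[OF st(1) st(1)] RI[OF this st(1)]
    show ?thesis
      unfolding expand using st RI' by (simp add: RE QR min_def algebra_simps)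
  qed
  ultimately show ?thesis by blast
qed

text \<open>Each increment is a coordinate functional of an increment of X, hence Gaussian.\<close>
lemma trace_increment_gaussian:
  "0 \<le> s \<Longrightarrow> s \<le> t \<Longrightarrow> real_gaussian M (\<lambda>\<omega>. inner (b t \<omega> - b s \<omega>) u)"
  using gaussian_vec_process_increment[OF gaussian[of 1 "\<lambda>_. coord_eval u"], of s t]
  by (simp add: inner_level0_trace_increment coord_eval_dual)

theorem trace_wiener: "wiener_process M b"
  unfolding wiener_process_def
proof (intro conjI allI impI ballI)
  show "\<exists>Q. linear Q \<and> (\<forall>s t u v. 0 \<le> s \<and> s \<le> t \<longrightarrow>
      real_gaussian M (\<lambda>\<omega>. inner (b t \<omega> - b s \<omega>) u) \<and>
      integrable M (\<lambda>\<omega>. inner (b t \<omega> - b s \<omega>) u * inner (b t \<omega> - b s \<omega>) v) \<and>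
      expectation (\<lambda>\<omega>. inner (b t \<omega> - b s \<omega>) u * inner (b t \<omega> - b s \<omega>) v) = (t - s) * inner u (Q v))"
    using trace_covariance trace_increment_gaussian by blast
  show "b 0 \<omega> = 0" for \<omega> by (simp add: level0_trace_def)
qed (simp_all add: trace_measurable trace_gaussian_family trace_centered trace_indep_increments)

text \<open>If X is the support function of a compact convex fuzzy set, the a.s. vanishing of the
  centered width E[s(0,i) + s(0,-i)] forces the fuzzy set to be a.s. the point b t.\<close>
lemma AE_indicator_trace:
  assumes X: "\<And>t \<omega>. X t \<omega> = supp_fun (B t \<omega>)"
    and F: "\<And>\<omega>. \<omega> \<in> space M \<Longrightarrow> Fkc (B t \<omega>)" and t: "t \<ge> 0"
  shows "AE \<omega> in M. B t \<omega> = indicator {b t \<omega>}"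
proof -
  have width: "AE \<omega> in M. X t \<omega> 0 i + X t \<omega> 0 (-i) = 0" if i: "i \<in> Basis" for i
  proof -
    have c: "integrable M (\<lambda>\<omega>. X t \<omega> 0 x)" "expectation (\<lambda>\<omega>. X t \<omega> 0 x) = 0" if "norm x = 1" for x
      using centered[OF point_eval_dual[OF that] t] by auto
    have "norm i = 1" "norm (-i) = 1" using i by (auto simp: norm_Basis)
    note c = c[OF this(1)] c[OF this(2)]
    have "AE \<omega> in M. 0 \<le> X t \<omega> 0 i + X t \<omega> 0 (-i)"
      using supp_fun0_width_nonneg[OF F] X by (intro AE_I2) simp
    from integral_nonneg_eq_0_iff_AE[OF Bochner_Integration.integrable_add[OF c(1) c(3)] this]
    show ?thesis using c by simp
  qed
  have "AE \<omega> in M. \<forall>i\<in>Basis. X t \<omega> 0 i + X t \<omega> 0 (-i) = 0"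
    by (rule AE_finite_allI) (use width in auto)
  with trace_coordinates_AE AE_space show ?thesis
  proof eventually_elim
    case (elim \<omega>)
    have "b t \<omega> = (\<Sum>i\<in>Basis. inner (b t \<omega>) i *\<^sub>R i)"
      by (rule euclidean_representation[symmetric])
    also have "\<dots> = (\<Sum>i\<in>Basis. supp_fun (B t \<omega>) 0 i *\<^sub>R i)"
      using elim X by (intro sum.cong) auto
    moreover have "B t \<omega> = indicator {\<Sum>i\<in>Basis. supp_fun (B t \<omega>) 0 i *\<^sub>R i}"
      using elim X by (intro Fkc_zero_width_indicator F) auto
    ultimately show ?case by simp
  qed
qed

end


section \<open>From a Wiener process to a Brownian motion in Cbar\<close>

locale wiener = prob_space M for M :: "'w measure" +
  fixes b :: "real \<Rightarrow> 'w \<Rightarrow> 'a::euclidean_space"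
  assumes wiener: "wiener_process M b"
begin

lemma measurable: "t \<ge> 0 \<Longrightarrow> b t \<in> borel_measurable M"
  using wiener unfolding wiener_process_def by blast

lemma inner_measurable: "t \<ge> 0 \<Longrightarrow> (\<lambda>\<omega>. inner (b t \<omega>) v) \<in> borel_measurable M"
  by (intro borel_measurable_inner measurable borel_measurable_const)

lemma start: "\<omega> \<in> space M \<Longrightarrow> b 0 \<omega> = 0"
  using wiener unfolding wiener_process_def by blast

lemma gaussian:
  "finite S \<Longrightarrow> S \<subseteq> {0..} \<Longrightarrow> gaussian_family M (S \<times> Basis) (\<lambda>(t,i) \<omega>. inner (b t \<omega>) i)"
  using wiener[unfolded wiener_process_def, THEN conjunct2, THEN conjunct2, THEN conjunct1] by blast

lemma centered:
  "t \<ge> 0 \<Longrightarrow> integrable M (\<lambda>\<omega>. inner (b t \<omega>) v) \<and> expectation (\<lambda>\<omega>. inner (b t \<omega>) v) = 0"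
  using wiener[unfolded wiener_process_def, THEN conjunct2, THEN conjunct2, THEN conjunct2, THEN conjunct1]
  by blast

lemma indep_increments:
  "0 \<le> t 0 \<Longrightarrow> (\<forall>k<n. t k < t (Suc k)) \<Longrightarrow>
    indep_vars (\<lambda>_. borel) (\<lambda>k \<omega>. b (t (Suc k)) \<omega> - b (t k) \<omega>) {..<n}"
  using wiener[unfolded wiener_process_def, THEN conjunct2, THEN conjunct2, THEN conjunct2,
      THEN conjunct2, THEN conjunct1]
  by blast

lemma increment_covariance:
  "\<exists>Q. \<forall>s t u v. 0 \<le> s \<and> s \<le> t \<longrightarrow>
    integrable M (\<lambda>\<omega>. inner (b t \<omega> - b s \<omega>) u * inner (b t \<omega> - b s \<omega>) v) \<and>
    expectation (\<lambda>\<omega>. inner (b t \<omega> - b s \<omega>) u * inner (b t \<omega> - b s \<omega>) v) = (t - s) * inner u (Q v)"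
  using wiener[unfolded wiener_process_def, THEN conjunct2, THEN conjunct2, THEN conjunct2,
      THEN conjunct2, THEN conjunct2] by blast

text \<open>Disjoint increments are independent and centered, so they are uncorrelated.\<close>
lemma disjoint_increments_uncorrelated:
  assumes st: "0 < s" "s < t"
  shows "integrable M (\<lambda>\<omega>. inner (b t \<omega> - b s \<omega>) u * inner (b s \<omega> - b 0 \<omega>) v) \<and>
    expectation (\<lambda>\<omega>. inner (b t \<omega> - b s \<omega>) u * inner (b s \<omega> - b 0 \<omega>) v) = 0"
proof -
  define \<tau> :: "nat \<Rightarrow> real" where "\<tau> k = (if k = 0 then 0 else if k = 1 then s else t)" for k
  define Y where "Y k \<omega> = inner (b (\<tau> (Suc k)) \<omega> - b (\<tau> k) \<omega>) (if k = 0 then v else u)" for k \<omega>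
  have "0 \<le> \<tau> 0 \<and> (\<forall>k<2. \<tau> k < \<tau> (Suc k))"
    using st by (auto simp: \<tau>_def less_Suc_eq numeral_2_eq_2)
  then have "indep_vars (\<lambda>_. borel) (\<lambda>k \<omega>. b (\<tau> (Suc k)) \<omega> - b (\<tau> k) \<omega>) {..<2}"
    by (intro indep_increments) auto
  then have Y_indep: "indep_vars (\<lambda>_. borel) Y {..<2}"
    unfolding Y_def by (rule indep_vars_compose2) (intro borel_measurable_continuous_onI continuous_intros)
  have Y_int: "integrable M (Y k)" if "k \<in> {..<2}" for k
  proof -
    have "integrable M (\<lambda>\<omega>. inner (b t' \<omega>) w - inner (b s' \<omega>) w)" if "0 \<le> s'" "0 \<le> t'" for s' t' w
      using centered[OF that(1)] centered[OF that(2)] by auto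
    moreover have "k = 0 \<or> k = 1" using \<open>k \<in> {..<2}\<close> by auto
    ultimately show ?thesis
      using st unfolding Y_def[abs_def] \<tau>_def inner_diff_left by auto
  qed
  have "expectation (Y 1) = 0"
    using centered[of t u] centered[of s u] st by (simp add: Y_def[abs_def] \<tau>_def inner_diff_left)
  moreover have "(\<Prod>k\<in>{..<2}. Y k \<omega>) = inner (b t \<omega> - b s \<omega>) u * inner (b s \<omega> - b 0 \<omega>) v" for \<omega>
    by (simp add: Y_def \<tau>_def lessThan_Suc numeral_2_eq_2)
  ultimately show ?thesis
    using indep_vars_integrable[OF _ Y_indep Y_int] indep_vars_lebesgue_integral[OF _ Y_indep Y_int]
    by (simp add: lessThan_Suc numeral_2_eq_2)
qed

lemma covariance:
  assumes Q: "\<And>s t u v. 0 \<le> s \<Longrightarrow> s \<le> t \<Longrightarrow>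
    integrable M (\<lambda>\<omega>. inner (b t \<omega> - b s \<omega>) u * inner (b t \<omega> - b s \<omega>) v) \<and>
    expectation (\<lambda>\<omega>. inner (b t \<omega> - b s \<omega>) u * inner (b t \<omega> - b s \<omega>) v) = (t - s) * inner u (Q v)"
    and st: "0 \<le> s" "0 \<le> t"
  shows "integrable M (\<lambda>\<omega>. inner (b t \<omega>) u * inner (b s \<omega>) v) \<and>
    expectation (\<lambda>\<omega>. inner (b t \<omega>) u * inner (b s \<omega>) v) = min t s * inner u (Q v)"
proof -
  have Q_sym: "inner u (Q v) = inner v (Q u)" for u v
    using Q[of 0 1 u v] Q[of 0 1 v u] by (simp add: mult.commute)
  have ordered: "integrable M (\<lambda>\<omega>. inner (b t \<omega>) u * inner (b s \<omega>) v) \<and>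
      expectation (\<lambda>\<omega>. inner (b t \<omega>) u * inner (b s \<omega>) v) = s * inner u (Q v)"
    if st: "0 \<le> s" "s \<le> t" for s t u v
  proof -
    define T1 where "T1 \<omega> = inner (b t \<omega> - b s \<omega>) u * inner (b s \<omega> - b 0 \<omega>) v" for \<omega>
    define T2 where "T2 \<omega> = inner (b s \<omega> - b 0 \<omega>) u * inner (b s \<omega> - b 0 \<omega>) v" for \<omega>
    have split: "AE \<omega> in M. T1 \<omega> + T2 \<omega> = inner (b t \<omega>) u * inner (b s \<omega>) v"
      using AE_space by eventually_elim (simp add: start T1_def T2_def inner_diff_left algebra_simps)
    have T2: "integrable M T2" "expectation T2 = s * inner u (Q v)"
      using Q[of 0 s u v] st unfolding T2_def by auto
    have T1: "integrable M T1 \<and> expectation T1 = 0"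
    proof (cases "s = 0 \<or> s = t")
      case True
      then have "T1 = (\<lambda>\<omega>. 0)" by (auto simp: T1_def)
      then show ?thesis by simp
    next
      case False
      then show ?thesis
        unfolding T1_def using disjoint_increments_uncorrelated st by simp
    qed
    have m: "(\<lambda>\<omega>. inner (b t \<omega>) u * inner (b s \<omega>) v) \<in> borel_measurable M"
      using st by (intro borel_measurable_times inner_measurable) auto
    show ?thesis
      using integrable_cong_AE_imp[OF _ m split] integral_cong_AE[OF _ m split] T1 T2
      by (simp add: borel_measurable_integrable)
  qed
  show ?thesis
  proof (cases "s \<le> t")
    case True
    then show ?thesis using ordered[OF st(1) True] by (simp add: min_def)
  next
    case False
    then show ?thesis
      using ordered[OF st(2), of s v u] Q_sym[of u v] by (simp add: min_def mult.commute)
  qed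
qed

lemma gaussian_directions:
  assumes S: "finite S" "S \<subseteq> {0..}" and K: "finite K"
  shows "gaussian_family M (S \<times> K) (\<lambda>(t,k) \<omega>. inner (b t \<omega>) (w k))"
  unfolding gaussian_family_def
proof (intro conjI allI ballI)
  show "(case p of (t,k) \<Rightarrow> \<lambda>\<omega>. inner (b t \<omega>) (w k)) \<in> borel_measurable M" if "p \<in> S \<times> K" for p
    using that S inner_measurable by (auto split: prod.split)
  fix c :: "real \<times> 'b \<Rightarrow> real"
  define c' where "c' = (\<lambda>(t,i). \<Sum>k\<in>K. c (t,k) * inner (w k) i)"
  have "(\<Sum>p\<in>S \<times> Basis. c' p * (case p of (t,i) \<Rightarrow> \<lambda>\<omega>. inner (b t \<omega>) i) \<omega>)
      = (\<Sum>p\<in>S \<times> K. c p * (case p of (t,k) \<Rightarrow> \<lambda>\<omega>. inner (b t \<omega>) (w k)) \<omega>)" for \<omega>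
  proof -
    have "(\<Sum>p\<in>S \<times> Basis. c' p * (case p of (t,i) \<Rightarrow> \<lambda>\<omega>. inner (b t \<omega>) i) \<omega>)
        = (\<Sum>t\<in>S. \<Sum>i\<in>Basis. (\<Sum>k\<in>K. c (t,k) * inner (w k) i) * inner (b t \<omega>) i)"
      by (simp add: sum.cartesian_product c'_def prod.case_eq_if)
    also have "\<dots> = (\<Sum>t\<in>S. \<Sum>k\<in>K. c (t,k) * (\<Sum>i\<in>Basis. inner (b t \<omega>) i * inner (w k) i))"
      by (simp add: sum_distrib_left sum_distrib_right sum.swap[of _ Basis] mult_ac)
    also have "\<dots> = (\<Sum>p\<in>S \<times> K. c p * (case p of (t,k) \<Rightarrow> \<lambda>\<omega>. inner (b t \<omega>) (w k)) \<omega>)"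
      by (simp add: euclidean_inner[symmetric] sum.cartesian_product prod.case_eq_if)
    finally show ?thesis .
  qed
  with gaussian_familyD(1)[OF gaussian[OF S], of c']
  show "real_gaussian M (\<lambda>\<omega>. \<Sum>p\<in>S \<times> K. c p * (case p of (t,k) \<Rightarrow> \<lambda>\<omega>. inner (b t \<omega>) (w k)) \<omega>)"
    by simp
qed

end

locale wiener_points = wiener M b for M :: "'w measure" and b :: "real \<Rightarrow> 'w \<Rightarrow> 'a::euclidean_space" +
  fixes X :: "real \<Rightarrow> 'w \<Rightarrow> real \<Rightarrow> 'a \<Rightarrow> real"
  assumes complete: "complete_measure M"
    and points: "\<And>t. t \<ge> 0 \<Longrightarrow>
      AE \<omega> in M. \<forall>\<alpha>\<in>{0..1}. \<forall>x\<in>sphere 0 1. X t \<omega> \<alpha> x = point_supp (b t \<omega>) \<alpha> x"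
begin

lemma dual_representation:
  assumes "t \<ge> 0"
  shows "AE \<omega> in M. \<forall>f\<in>Cbar_dual. f (X t \<omega>) = inner (b t \<omega>) (dual_vec f)"
  using points[OF assms]
proof eventually_elim
  case (elim \<omega>)
  show ?case
  proof
    fix f :: "(real \<Rightarrow> 'a \<Rightarrow> real) \<Rightarrow> real" assume f: "f \<in> Cbar_dual"
    have "f (X t \<omega>) = f (point_supp (b t \<omega>))"
      by (rule Cbar_dual_cong[OF f point_supp_Cbar]) (use elim in auto)
    then show "f (X t \<omega>) = inner (b t \<omega>) (dual_vec f)" using point_supp_dual[OF f] by simp
  qed
qed

text \<open>Consequently the dual functionals of X inherit measurability (by completeness), joint
  Gaussianity, centering and covariance from b.\<close>
lemma dual_AE_eq:
  assumes "f \<in> Cbar_dual" "t \<ge> 0"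
  shows "AE \<omega> in M. inner (b t \<omega>) (dual_vec f) = f (X t \<omega>)"
  using dual_representation[OF assms(2)] by eventually_elim (use assms(1) in simp)

lemma measurable_dual:
  assumes "f \<in> Cbar_dual" "t \<ge> 0"
  shows "(\<lambda>\<omega>. f (X t \<omega>)) \<in> borel_measurable M"
  using dual_AE_eq[OF assms] by (intro measurable_AE_complete[OF complete inner_measurable[OF assms(2), of "dual_vec f"]])
    (auto elim: eventually_mono)

lemma Cbar_gaussian:
  assumes fs: "\<forall>k<n. fs k \<in> Cbar_dual"
  shows "gaussian_vec_process M n (\<lambda>t k \<omega>. fs k (X t \<omega>))"
  unfolding gaussian_vec_process_def
proof (intro allI impI)
  fix S :: "real set" assume S: "finite S \<and> S \<subseteq> {0..}"
  have "gaussian_family M (S \<times> {..<n}) (\<lambda>(t,k) \<omega>. inner (b t \<omega>) (dual_vec (fs k)))"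
    using S by (intro gaussian_directions) auto
  then show "gaussian_family M (S \<times> {..<n}) (\<lambda>(t, k) \<omega>. fs k (X t \<omega>))"
  proof (rule gaussian_family_AE)
    show "(case p of (t, k) \<Rightarrow> \<lambda>\<omega>. fs k (X t \<omega>)) \<in> borel_measurable M" if "p \<in> S \<times> {..<n}" for p
      using that S fs by (auto split: prod.split intro!: measurable_dual)
    have "AE \<omega> in M. \<forall>t\<in>S. \<forall>f\<in>Cbar_dual. f (X t \<omega>) = inner (b t \<omega>) (dual_vec f)"
      by (rule AE_finite_allI) (use S dual_representation in auto)
    then show "AE \<omega> in M. \<forall>p\<in>S \<times> {..<n}. (case p of (t, k) \<Rightarrow> \<lambda>\<omega>. inner (b t \<omega>) (dual_vec (fs k))) \<omega>
        = (case p of (t, k) \<Rightarrow> \<lambda>\<omega>. fs k (X t \<omega>)) \<omega>"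
      by eventually_elim (use fs in \<open>auto split: prod.split\<close>)
  qed (use S in auto)
qed

lemma Cbar_start: "AE \<omega> in M. \<forall>\<alpha>\<in>{0..1}. \<forall>x\<in>sphere 0 1. X 0 \<omega> \<alpha> x = 0"
  using points[OF order.refl] AE_space by eventually_elim (simp add: start point_supp_def)

lemma Cbar_centered:
  assumes "t \<ge> 0" "f \<in> Cbar_dual"
  shows "integrable M (\<lambda>\<omega>. f (X t \<omega>)) \<and> expectation (\<lambda>\<omega>. f (X t \<omega>)) = 0"
  using integrable_cong_AE_imp[OF centered[OF assms(1), THEN conjunct1] measurable_dual[OF assms(2,1)]
      dual_AE_eq[OF assms(2,1)]]
    integral_cong_AE[OF inner_measurable[OF assms(1)] measurable_dual[OF assms(2,1)]
      dual_AE_eq[OF assms(2,1)]]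
    centered[OF assms(1)] by simp

lemma Cbar_covariance:
  "\<exists>R. \<forall>f\<in>Cbar_dual. \<forall>g\<in>Cbar_dual. \<forall>s\<ge>0. \<forall>t\<ge>0.
     integrable M (\<lambda>\<omega>. f (X t \<omega>) * g (X s \<omega>)) \<and>
     expectation (\<lambda>\<omega>. f (X t \<omega>) * g (X s \<omega>)) = min t s * R f g"
proof -
  obtain Q where Q: "\<forall>s t u v. 0 \<le> s \<and> s \<le> t \<longrightarrow>
    integrable M (\<lambda>\<omega>. inner (b t \<omega> - b s \<omega>) u * inner (b t \<omega> - b s \<omega>) v) \<and>
    expectation (\<lambda>\<omega>. inner (b t \<omega> - b s \<omega>) u * inner (b t \<omega> - b s \<omega>) v) = (t - s) * inner u (Q v)"
    using increment_covariance by blast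
  have "integrable M (\<lambda>\<omega>. f (X t \<omega>) * g (X s \<omega>)) \<and>
      expectation (\<lambda>\<omega>. f (X t \<omega>) * g (X s \<omega>)) = min t s * inner (dual_vec f) (Q (dual_vec g))"
    if fg: "f \<in> Cbar_dual" "g \<in> Cbar_dual" and st: "0 \<le> s" "0 \<le> t" for f g s t
  proof -
    have ae: "AE \<omega> in M. inner (b t \<omega>) (dual_vec f) * inner (b s \<omega>) (dual_vec g) = f (X t \<omega>) * g (X s \<omega>)"
      using dual_AE_eq[OF fg(1) st(2)] dual_AE_eq[OF fg(2) st(1)] by eventually_elim simp
    have m1: "(\<lambda>\<omega>. f (X t \<omega>) * g (X s \<omega>)) \<in> borel_measurable M"
      using fg st by (intro borel_measurable_times measurable_dual)
    have m2: "(\<lambda>\<omega>. inner (b t \<omega>) (dual_vec f) * inner (b s \<omega>) (dual_vec g)) \<in> borel_measurable M"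
      using st by (intro borel_measurable_times inner_measurable)
    note c = covariance[OF Q[rule_format] st, of "dual_vec f" "dual_vec g"]
    show ?thesis
      using integrable_cong_AE_imp[OF c[THEN conjunct1] m1 ae] integral_cong_AE[OF m2 m1 ae] c by simp
  qed
  then show ?thesis by (intro exI[of _ "\<lambda>f g. inner (dual_vec f) (Q (dual_vec g))"]) blast
qed

lemma increment_event_AE:
  assumes f: "f \<in> Cbar_dual" and A: "A \<in> sets borel" and s: "0 \<le> s" "0 \<le> s'"
  shows "(\<lambda>\<omega>. f (\<lambda>\<alpha> x. X s' \<omega> \<alpha> x - X s \<omega> \<alpha> x)) -` A \<inter> space M
    \<in> AE_closure (sigma_sets (space M) {(\<lambda>\<omega>. b s' \<omega> - b s \<omega>) -` A \<inter> space M | A. A \<in> sets borel})"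
    (is "?E \<in> AE_closure ?F")
proof -
  let ?\<phi> = "\<lambda>v::'a. inner v (dual_vec f)"
  have "AE \<omega> in M. f (\<lambda>\<alpha> x. X s' \<omega> \<alpha> x - X s \<omega> \<alpha> x) = ?\<phi> (b s' \<omega> - b s \<omega>)"
    using points[OF s(2)] points[OF s(1)]
  proof eventually_elim
    case (elim \<omega>)
    have "f (\<lambda>\<alpha> x. X s' \<omega> \<alpha> x - X s \<omega> \<alpha> x) = f (point_supp (b s' \<omega> - b s \<omega>))"
      by (rule Cbar_dual_cong[OF f point_supp_Cbar]) (use elim in \<open>simp add: point_supp_def inner_diff_right\<close>)
    then show ?case using point_supp_dual[OF f] by simp
  qed
  then have ae: "AE \<omega> in M. (\<omega> \<in> ?E) = (\<omega> \<in> (\<lambda>\<omega>. b s' \<omega> - b s \<omega>) -` (?\<phi> -` A) \<inter> space M)"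
    using AE_space by eventually_elim auto
  have "?\<phi> -` A \<in> sets borel"
    using measurable_sets[OF _ A, of ?\<phi> borel] by (simp add: borel_measurable_continuous_onI continuous_intros)
  then have F: "(\<lambda>\<omega>. b s' \<omega> - b s \<omega>) -` (?\<phi> -` A) \<inter> space M \<in> ?F"
    by (blast intro: sigma_sets.Basic)
  have ev: "(\<lambda>\<omega>. b s' \<omega> - b s \<omega>) -` (?\<phi> -` A) \<inter> space M \<in> events"
    using measurable_sets[OF borel_measurable_diff[OF measurable[OF s(2)] measurable[OF s(1)]]
        \<open>?\<phi> -` A \<in> sets borel\<close>] .
  have "?E \<in> events"
    by (rule complete_measure.in_sets_AE[OF complete _ ev]) (use ae in \<open>auto elim: eventually_mono\<close>)
  with F ae show ?thesis unfolding AE_closure_def by blast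
qed

lemma Cbar_indep_increments:
  assumes t: "0 \<le> t 0" "\<forall>k<n. t k < t (Suc k)"
  shows "indep_sets (\<lambda>k. sigma_sets (space M)
      {(\<lambda>\<omega>. f (\<lambda>\<alpha> x. X (t (Suc k)) \<omega> \<alpha> x - X (t k) \<omega> \<alpha> x)) -` A \<inter> space M | f A.
        f \<in> Cbar_dual \<and> A \<in> sets borel}) {..<n}"
proof (rule indep_sets_AE_generators)
  show "indep_sets (\<lambda>k. sigma_sets (space M)
      {(\<lambda>\<omega>. b (t (Suc k)) \<omega> - b (t k) \<omega>) -` A \<inter> space M | A. A \<in> sets borel}) {..<n}"
    using indep_increments[OF t] unfolding indep_vars_def by blast
  show "sigma_algebra (space M) (sigma_sets (space M)
      {(\<lambda>\<omega>. b (t (Suc k)) \<omega> - b (t k) \<omega>) -` A \<inter> space M | A. A \<in> sets borel})" for k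
    by (rule sigma_algebra_sigma_sets) auto
  fix k assume "k \<in> {..<n}"
  then have "0 \<le> t k" "0 \<le> t (Suc k)" using increasing_times_nonneg[OF t] by auto
  then show "{(\<lambda>\<omega>. f (\<lambda>\<alpha> x. X (t (Suc k)) \<omega> \<alpha> x - X (t k) \<omega> \<alpha> x)) -` A \<inter> space M | f A.
        f \<in> Cbar_dual \<and> A \<in> sets borel} \<subseteq> AE_closure (sigma_sets (space M)
      {(\<lambda>\<omega>. b (t (Suc k)) \<omega> - b (t k) \<omega>) -` A \<inter> space M | A. A \<in> sets borel})"
    using increment_event_AE by blast
qed

theorem Cbar_BM: "Cbar_BM M X"
  unfolding Cbar_BM_def
proof (intro conjI allI impI ballI)
  show "\<exists>R. \<forall>f\<in>Cbar_dual. \<forall>g\<in>Cbar_dual. \<forall>s\<ge>0. \<forall>t\<ge>0.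
      integrable M (\<lambda>\<omega>. f (X t \<omega>) * g (X s \<omega>)) \<and>
      expectation (\<lambda>\<omega>. f (X t \<omega>) * g (X s \<omega>)) = min t s * R f g"
    by (rule Cbar_covariance)
qed (simp_all add: Cbar_gaussian Cbar_start Cbar_centered Cbar_indep_increments)

end

theorem theorem1:
  fixes M :: "'w measure"
    and F :: "real \<Rightarrow> 'w measure"
    and B :: "real \<Rightarrow> 'w \<Rightarrow> ('a::euclidean_space \<Rightarrow> real)"
  assumes "prob_space M"
    and "complete_measure M"
    and "usual_filtration M F"
    and "adapted_fuzzy_process M F B"
  shows "fuzzy_BM M B \<longleftrightarrow>
    (\<exists>b :: real \<Rightarrow> 'w \<Rightarrow> 'a. wiener_process M b \<and>
       (\<forall>t\<ge>0. AE \<omega> in M. B t \<omega> = indicator {b t \<omega>}))"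
proof
  assume "fuzzy_BM M B"
  then interpret Cbar_brownian M "\<lambda>t \<omega>. supp_fun (B t \<omega>)"
    unfolding fuzzy_BM_def by (intro Cbar_brownian.intro Cbar_brownian_axioms.intro assms(1))
  have "AE \<omega> in M. B t \<omega> = indicator {level0_trace (\<lambda>t \<omega>. supp_fun (B t \<omega>)) t \<omega>}" if "t \<ge> 0" for t
    using assms(4) that unfolding adapted_fuzzy_process_def by (intro AE_indicator_trace) auto
  with trace_wiener show "\<exists>b. wiener_process M b \<and> (\<forall>t\<ge>0. AE \<omega> in M. B t \<omega> = indicator {b t \<omega>})"
    by blast
next
  assume "\<exists>b. wiener_process M b \<and> (\<forall>t\<ge>0. AE \<omega> in M. B t \<omega> = indicator {b t \<omega>})"
  then obtain b where W: "wiener_process M b" and crisp: "\<And>t. t \<ge> 0 \<Longrightarrow> AE \<omega> in M. B t \<omega> = indicator {b t \<omega>}"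
    by blast
  interpret wiener_points M b "\<lambda>t \<omega>. supp_fun (B t \<omega>)"
  proof (intro wiener_points.intro wiener.intro wiener_axioms.intro wiener_points_axioms.intro assms(1,2) W)
    show "AE \<omega> in M. \<forall>\<alpha>\<in>{0..1}. \<forall>x\<in>sphere 0 1. supp_fun (B t \<omega>) \<alpha> x = point_supp (b t \<omega>) \<alpha> x"
      if "t \<ge> 0" for t
      using crisp[OF that] by eventually_elim (simp add: supp_fun_indicator)
  qed
  show "fuzzy_BM M B" unfolding fuzzy_BM_def by (rule Cbar_BM)
qed

end
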